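(* Let $A$ and $B$ be automata such that $A$ is a forest and $A\le_{*T}B$. Then $A\le_B B$.
   Context: An automaton $A$ consists of a set $\mathrm{states}(A)$ of states, a nonempty set $\mathrm{start}(A)\subseteq\mathrm{states}(A)$ of start states, a set $\mathrm{acts}(A)$ of actions containing a distinguished internal action $\tau$, and a set $\mathrm{steps}(A)\subseteq\mathrm{states}(A)\times\mathrm{acts}(A)\times\mathrm{states}(A)$ of steps; write $s\xrightarrow{a}_A t$ for $(s,a,t)\in\mathrm{steps}(A)$. An execution fragment of $A$ is a finite or infinite alternating sequence $s_0a_1s_1a_2s_2\cdots$ of states and actions, beginning with a state and, if finite, ending with a state, such that $s_{i-1}\xrightarrow{a_i}_A s_i$ for all $i>0$. An execution is an execution fragment whose first state is a start state. The trace of an execution fragment is the subsequence of its non-$\tau$ actions; a trace of $A$ is the trace of some execution of $A$, and $\mathrm{traces}^*(A)$ is the set of finite traces of $A$. $A\le_{*T}B$ means $\mathrm{traces}^*(A)\subseteq\mathrm{traces}^*(B)$. $A$ is a forest if for each state $s$ of $A$ there is exactly one (finite) execution of $A$ whose last state is $s$. For a relation $R$ write $R[s]=\{u\mid (s,u)\in R\}$. A normed backward simulation from $A$ to $B$ is a pair $(b,n)$ where $b\subseteq\mathrm{states}(A)\times\mathrm{states}(B)$ is total (every $s\in\mathrm{states}(A)$ has $b[s]\neq\emptyset$) and $n:(\mathrm{steps}(A)\cup\mathrm{start}(A))\times\mathrm{states}(B)\to S$ for some set $S$ with a well-founded strict order $<$, such that: (1) if $s\in\mathrm{start}(A)$ and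 $u\in b[s]$ then (a) $u\in\mathrm{start}(B)$, or (b) there is $v\in b[s]$ with $v\xrightarrow{\tau}_B u$ and $n(s,v)<n(s,u)$; (2) if $t\xrightarrow{a}_A s$ and $u\in b[s]$ then (a) $u\in b[t]$ and $a=\tau$, or (b) there is $v\in b[t]$ with $v\xrightarrow{a}_B u$, or (c) there is $v\in b[s]$ with $v\xrightarrow{\tau}_B u$ and $n(t\xrightarrow{a}s,v)<n(t\xrightarrow{a}s,u)$. Write $A\le_B B$ if one exists. *)

theory Defs
  imports Main
begin

text \<open>Automata. The internal action tau is a parameter shared by all automata under
comparison (same action type).\<close>

record ('s, 'a) automaton =
  states :: "'s set"
  start  :: "'s set"
  acts   :: "'a set"
  steps  :: "('s \<times> 'a \<times> 's) set"

definition is_automaton :: "'a \<Rightarrow> ('s, 'a) automaton \<Rightarrow> bool" where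
  "is_automaton tau A \<longleftrightarrow>
     start A \<noteq> {} \<and> start A \<subseteq> states A \<and> tau \<in> acts A \<and>
     steps A \<subseteq> states A \<times> acts A \<times> states A"

definition fin_exec_frag :: "('s, 'a) automaton \<Rightarrow> 's \<Rightarrow> ('a \<times> 's) list \<Rightarrow> bool" where
  "fin_exec_frag A s0 xs \<longleftrightarrow> s0 \<in> states A \<and>
     (\<forall>i < length xs. ((if i = 0 then s0 else snd (xs ! (i - 1))), fst (xs ! i), snd (xs ! i)) \<in> steps A)"

definition inf_exec_frag :: "('s, 'a) automaton \<Rightarrow> 's \<Rightarrow> (nat \<Rightarrow> 'a \<times> 's) \<Rightarrow> bool" where
  "inf_exec_frag A s0 f \<longleftrightarrow> s0 \<in> states A \<and>
     (\<forall>i. ((if i = 0 then s0 else snd (f (i - 1))), fst (f i), snd (f i)) \<in> steps A)"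

definition fin_exec :: "('s, 'a) automaton \<Rightarrow> 's \<Rightarrow> ('a \<times> 's) list \<Rightarrow> bool" where
  "fin_exec A s0 xs \<longleftrightarrow> s0 \<in> start A \<and> fin_exec_frag A s0 xs"

definition inf_exec :: "('s, 'a) automaton \<Rightarrow> 's \<Rightarrow> (nat \<Rightarrow> 'a \<times> 's) \<Rightarrow> bool" where
  "inf_exec A s0 f \<longleftrightarrow> s0 \<in> start A \<and> inf_exec_frag A s0 f"

definition last_state :: "'s \<Rightarrow> ('a \<times> 's) list \<Rightarrow> 's" where
  "last_state s0 xs = (if xs = [] then s0 else snd (last xs))"

definition fin_trace :: "'a \<Rightarrow> ('a \<times> 's) list \<Rightarrow> 'a list" where
  "fin_trace tau xs = filter (\<lambda>a. a \<noteq> tau) (map fst xs)"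

definition inf_has_fin_trace :: "'a \<Rightarrow> (nat \<Rightarrow> 'a \<times> 's) \<Rightarrow> 'a list \<Rightarrow> bool" where
  "inf_has_fin_trace tau f tr \<longleftrightarrow> finite {i. fst (f i) \<noteq> tau} \<and>
     tr = map (\<lambda>i. fst (f i)) (sorted_list_of_set {i. fst (f i) \<noteq> tau})"

definition fin_traces :: "'a \<Rightarrow> ('s, 'a) automaton \<Rightarrow> 'a list set" where
  "fin_traces tau A =
     {tr. (\<exists>s0 xs. fin_exec A s0 xs \<and> tr = fin_trace tau xs) \<or>
          (\<exists>s0 f. inf_exec A s0 f \<and> inf_has_fin_trace tau f tr)}"

definition fin_trace_incl :: "'a \<Rightarrow> ('s, 'a) automaton \<Rightarrow> ('t, 'a) automaton \<Rightarrow> bool" where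
  "fin_trace_incl tau A B \<longleftrightarrow> fin_traces tau A \<subseteq> fin_traces tau B"

definition is_forest :: "('s, 'a) automaton \<Rightarrow> bool" where
  "is_forest A \<longleftrightarrow> (\<forall>s \<in> states A. \<exists>!e. fin_exec A (fst e) (snd e) \<and> last_state (fst e) (snd e) = s)"

text \<open>The norm is indexed by start states (Inl s) and
steps (Inr (t,a,s)) of A together with a state of B. Its codomain is represented by
the type 'm with a well-founded strict order R (pairs (x,y) meaning x < y).\<close>

definition normed_bsim ::
  "'a \<Rightarrow> ('s, 'a) automaton \<Rightarrow> ('t, 'a) automaton \<Rightarrow> ('s \<times> 't) set
     \<Rightarrow> (('s + ('s \<times> 'a \<times> 's)) \<times> 't \<Rightarrow> 'm) \<Rightarrow> ('m \<times> 'm) set \<Rightarrow> bool" where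
  "normed_bsim tau A B b n R \<longleftrightarrow>
     wf R \<and> trans R \<and>
     b \<subseteq> states A \<times> states B \<and>
     (\<forall>s \<in> states A. b `` {s} \<noteq> {}) \<and>
     (\<forall>s \<in> start A. \<forall>u \<in> b `` {s}.
        u \<in> start B \<or>
        (\<exists>v \<in> b `` {s}. (v, tau, u) \<in> steps B \<and> (n (Inl s, v), n (Inl s, u)) \<in> R)) \<and>
     (\<forall>t a s. (t, a, s) \<in> steps A \<longrightarrow> (\<forall>u \<in> b `` {s}.
        (u \<in> b `` {t} \<and> a = tau) \<or>
        (\<exists>v \<in> b `` {t}. (v, a, u) \<in> steps B) \<or>
        (\<exists>v \<in> b `` {s}. (v, tau, u) \<in> steps B \<and>
            (n (Inr (t, a, s), v), n (Inr (t, a, s), u)) \<in> R)))"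

text \<open>The norm codomain is taken to be the type of the norm's domain; this is
no loss of generality since any norm into a well-founded order can be pulled back
along itself (inverse image of a well-founded order is well-founded).\<close>

definition bsim_le :: "'a \<Rightarrow> ('s, 'a) automaton \<Rightarrow> ('t, 'a) automaton \<Rightarrow> bool" where
  "bsim_le tau A B \<longleftrightarrow>
     (\<exists>b (n :: ('s + ('s \<times> 'a \<times> 's)) \<times> 't \<Rightarrow> ('s + ('s \<times> 'a \<times> 's)) \<times> 't) R.
        normed_bsim tau A B b n R)"

end

theory Submission
  imports Defs
begin

text \<open>In a forest every state \<open>s\<close> of \<open>A\<close> is reached by exactly one execution, so it has a
  well-defined trace. Relate \<open>s\<close> to every state \<open>u\<close> of \<open>B\<close> reached by some execution of
  \<open>B\<close> with that trace; finite trace inclusion makes the relation total. The norm of \<open>u\<close> is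
  the length of a shortest such execution. Removing its last step shows that \<open>u\<close> is a
  start state (empty trace), or is entered by an internal step from a state with a shorter
  witness, or by a visible step from a state related to the predecessor in \<open>A\<close>.\<close>

lemma last_state_snoc [simp]: "last_state s0 (xs @ [(a, s)]) = s"
  by (simp add: last_state_def)

lemma fin_trace_snoc:
  "fin_trace tau (xs @ [(a, s)]) = fin_trace tau xs @ (if a = tau then [] else [a])"
  by (simp add: fin_trace_def)

lemma fin_exec_frag_snoc:
  "fin_exec_frag A s0 (xs @ [(a, s)]) \<longleftrightarrow>
     fin_exec_frag A s0 xs \<and> (last_state s0 xs, a, s) \<in> steps A"
proof -
  have prefix_steps:
    "(if i = 0 then s0 else snd ((xs @ [(a, s)]) ! (i - 1)), fst ((xs @ [(a, s)]) ! i),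
        snd ((xs @ [(a, s)]) ! i)) =
     (if i = 0 then s0 else snd (xs ! (i - 1)), fst (xs ! i), snd (xs ! i))"
    if "i < length xs" for i
    using that by (auto simp: nth_append)
  have last_step:
    "(if length xs = 0 then s0 else snd ((xs @ [(a, s)]) ! (length xs - 1)),
        fst ((xs @ [(a, s)]) ! length xs), snd ((xs @ [(a, s)]) ! length xs)) =
     (last_state s0 xs, a, s)"
    by (cases "xs = []") (simp_all add: nth_append last_state_def last_conv_nth)
  show ?thesis
    unfolding fin_exec_frag_def length_append_singleton All_less_Suc
    using prefix_steps last_step by auto
qed

lemma fin_exec_snoc:
  "fin_exec A s0 (xs @ [(a, s)]) \<longleftrightarrow> fin_exec A s0 xs \<and> (last_state s0 xs, a, s) \<in> steps A"
  by (simp add: fin_exec_def fin_exec_frag_snoc)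

lemma fin_exec_last_state_in_states:
  assumes "is_automaton tau A" and "fin_exec A s0 xs"
  shows "last_state s0 xs \<in> states A"
  using assms(2)
proof (induction xs rule: rev_induct)
  case Nil
  then show ?case
    by (simp add: fin_exec_def fin_exec_frag_def last_state_def)
next
  case (snoc x xs)
  obtain a s where "x = (a, s)" by fastforce
  with snoc.prems assms(1) show ?case
    by (auto simp: fin_exec_snoc is_automaton_def)
qed

lemma inf_exec_fin_trace_prefix:
  assumes "inf_exec A s0 f" and "inf_has_fin_trace tau f tr"
  obtains xs where "fin_exec A s0 xs" and "fin_trace tau xs = tr"
proof -
  let ?I = "{i. fst (f i) \<noteq> tau}"
  have fin: "finite ?I" and tr: "tr = map (\<lambda>i. fst (f i)) (sorted_list_of_set ?I)"
    using assms(2) by (simp_all add: inf_has_fin_trace_def)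
  define N where "N = Suc (Max ?I)"
  have I_below_N: "?I \<subseteq> {..<N}"
    using Max_ge[OF fin] unfolding N_def by (auto simp: le_imp_less_Suc)
  define xs where "xs = map f [0..<N]"
  have steps: "((if i = 0 then s0 else snd (f (i - 1))), fst (f i), snd (f i)) \<in> steps A" for i
    using assms(1) by (simp add: inf_exec_def inf_exec_frag_def)
  have "fin_exec A s0 xs"
    unfolding fin_exec_def fin_exec_frag_def
  proof (intro conjI allI impI)
    fix i assume "i < length xs"
    then show "(if i = 0 then s0 else snd (xs ! (i - 1)), fst (xs ! i), snd (xs ! i)) \<in> steps A"
      using steps[of i] by (cases i) (simp_all add: xs_def)
  qed (use assms(1) in \<open>simp_all add: inf_exec_def inf_exec_frag_def\<close>)
  moreover have "filter (\<lambda>i. fst (f i) \<noteq> tau) [0..<N] = sorted_list_of_set ?I"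
    by (rule sorted_distinct_set_unique) (use fin I_below_N in \<open>auto intro: sorted_wrt_filter\<close>)
  then have "fin_trace tau xs = tr"
    unfolding fin_trace_def xs_def tr map_map filter_map by (simp add: comp_def)
  ultimately show thesis by (rule that)
qed

lemma mem_fin_traces_iff:
  "tr \<in> fin_traces tau A \<longleftrightarrow> (\<exists>s0 xs. fin_exec A s0 xs \<and> fin_trace tau xs = tr)"
proof
  assume "tr \<in> fin_traces tau A"
  then consider (fin) "\<exists>s0 xs. fin_exec A s0 xs \<and> fin_trace tau xs = tr"
    | (inf) s0 f where "inf_exec A s0 f" and "inf_has_fin_trace tau f tr"
    unfolding fin_traces_def by blast
  then show "\<exists>s0 xs. fin_exec A s0 xs \<and> fin_trace tau xs = tr"
  proof cases
    case (inf s0 f)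
    then obtain xs where "fin_exec A s0 xs" and "fin_trace tau xs = tr"
      by (rule inf_exec_fin_trace_prefix)
    then show ?thesis by blast
  qed
qed (auto simp: fin_traces_def)

definition state_trace :: "'a \<Rightarrow> ('s, 'a) automaton \<Rightarrow> 's \<Rightarrow> 'a list" where
  "state_trace tau A s =
     fin_trace tau (snd (THE e. fin_exec A (fst e) (snd e) \<and> last_state (fst e) (snd e) = s))"

lemma forest_exec_to_state:
  assumes "is_forest A" and "s \<in> states A"
  obtains s0 xs where "fin_exec A s0 xs" and "last_state s0 xs = s"
proof -
  have "\<exists>!e. fin_exec A (fst e) (snd e) \<and> last_state (fst e) (snd e) = s"
    using assms unfolding is_forest_def by blast
  then obtain e where "fin_exec A (fst e) (snd e)" and "last_state (fst e) (snd e) = s"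
    by (auto dest: ex1_implies_ex)
  then show thesis by (rule that)
qed

lemma state_trace_eq:
  assumes "is_automaton tau A" and "is_forest A"
    and "fin_exec A s0 xs" and "last_state s0 xs = s"
  shows "state_trace tau A s = fin_trace tau xs"
proof -
  have "s \<in> states A"
    using fin_exec_last_state_in_states[OF assms(1,3)] assms(4) by simp
  then have "\<exists>!e. fin_exec A (fst e) (snd e) \<and> last_state (fst e) (snd e) = s"
    using assms(2) unfolding is_forest_def by blast
  then have "(THE e. fin_exec A (fst e) (snd e) \<and> last_state (fst e) (snd e) = s) = (s0, xs)"
    by (rule the1_equality) (simp add: assms(3,4))
  then show ?thesis
    by (simp add: state_trace_def)
qed

lemma state_trace_start:
  assumes "is_automaton tau A" and "is_forest A" and "s \<in> start A"
  shows "state_trace tau A s = []"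
proof -
  have "fin_exec A s []"
    using assms(1,3) by (auto simp: is_automaton_def fin_exec_def fin_exec_frag_def)
  then show ?thesis
    using state_trace_eq[OF assms(1,2)] by (simp add: last_state_def fin_trace_def)
qed

lemma state_trace_step:
  assumes "is_automaton tau A" and "is_forest A" and "(t, a, s) \<in> steps A"
  shows "state_trace tau A s = state_trace tau A t @ (if a = tau then [] else [a])"
proof -
  have "t \<in> states A"
    using assms(1,3) by (auto simp: is_automaton_def)
  then obtain s0 xs where exec: "fin_exec A s0 xs" and last: "last_state s0 xs = t"
    by (rule forest_exec_to_state[OF assms(2)])
  then have "fin_exec A s0 (xs @ [(a, s)])"
    using assms(3) by (simp add: fin_exec_snoc)
  then show ?thesis
    using state_trace_eq[OF assms(1,2)] exec last by (simp add: fin_trace_snoc)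
qed

lemma state_trace_in_fin_traces:
  assumes "is_automaton tau A" and "is_forest A" and "s \<in> states A"
  shows "state_trace tau A s \<in> fin_traces tau A"
proof -
  obtain s0 xs where "fin_exec A s0 xs" and "last_state s0 xs = s"
    using assms(2,3) by (rule forest_exec_to_state)
  then show ?thesis
    using state_trace_eq[OF assms(1,2)] by (auto simp: mem_fin_traces_iff)
qed

definition reaches_by_trace :: "'a \<Rightarrow> ('t, 'a) automaton \<Rightarrow> 'a list \<Rightarrow> 't \<Rightarrow> nat \<Rightarrow> bool" where
  "reaches_by_trace tau B tr u k \<longleftrightarrow>
     (\<exists>u0 ys. fin_exec B u0 ys \<and> last_state u0 ys = u \<and> length ys = k \<and> fin_trace tau ys = tr)"

definition min_steps_by_trace :: "'a \<Rightarrow> ('t, 'a) automaton \<Rightarrow> 'a list \<Rightarrow> 't \<Rightarrow> nat" where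
  "min_steps_by_trace tau B tr u = (LEAST k. reaches_by_trace tau B tr u k)"

lemma reaches_by_trace_in_states:
  assumes "is_automaton tau B" and "reaches_by_trace tau B tr u k"
  shows "u \<in> states B"
  using assms fin_exec_last_state_in_states by (fastforce simp: reaches_by_trace_def)

lemma reaches_by_trace_cases:
  assumes "reaches_by_trace tau B tr u k"
  obtains "u \<in> start B" and "tr = []"
  | v where "(v, tau, u) \<in> steps B" and "reaches_by_trace tau B tr v (k - 1)" and "0 < k"
  | v c tr' k' where "c \<noteq> tau" and "(v, c, u) \<in> steps B" and "tr = tr' @ [c]"
      and "reaches_by_trace tau B tr' v k'"
proof -
  obtain u0 ys where exec: "fin_exec B u0 ys" and last: "last_state u0 ys = u"
    and len: "length ys = k" and trace: "fin_trace tau ys = tr"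
    using assms by (auto simp: reaches_by_trace_def)
  show thesis
  proof (cases ys rule: rev_cases)
    case Nil
    then show thesis
      using that(1) exec last trace by (simp add: fin_exec_def last_state_def fin_trace_def)
  next
    case (snoc ys' y)
    obtain c w where y: "y = (c, w)" by fastforce
    with snoc last have "w = u" by simp
    with snoc y exec have exec': "fin_exec B u0 ys'" and step: "(last_state u0 ys', c, u) \<in> steps B"
      by (simp_all add: fin_exec_snoc)
    show thesis
    proof (cases "c = tau")
      case True
      have "reaches_by_trace tau B tr (last_state u0 ys') (k - 1)"
        unfolding reaches_by_trace_def
        using exec' snoc y \<open>w = u\<close> len trace True by (auto simp: fin_trace_snoc intro!: exI[of _ u0])
      then show thesis
        using that(2) step True snoc len by simp
    next
      case False
      have "reaches_by_trace tau B (fin_trace tau ys') (last_state u0 ys') (length ys')"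
        unfolding reaches_by_trace_def using exec' by blast
      moreover have "tr = fin_trace tau ys' @ [c]"
        using trace snoc y False by (simp add: fin_trace_snoc)
      ultimately show thesis
        using that(3) False step by blast
    qed
  qed
qed

lemma reaches_by_trace_min_cases:
  assumes "reaches_by_trace tau B tr u k"
  obtains "u \<in> start B" and "tr = []"
  | v k' where "(v, tau, u) \<in> steps B" and "reaches_by_trace tau B tr v k'"
      and "min_steps_by_trace tau B tr v < min_steps_by_trace tau B tr u"
  | v c tr' k' where "c \<noteq> tau" and "(v, c, u) \<in> steps B" and "tr = tr' @ [c]"
      and "reaches_by_trace tau B tr' v k'"
proof -
  let ?m = "min_steps_by_trace tau B tr u"
  have "reaches_by_trace tau B tr u ?m"
    unfolding min_steps_by_trace_def using assms by (rule LeastI)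
  then show thesis
  proof (cases rule: reaches_by_trace_cases)
    case 1
    then show thesis by (rule that(1))
  next
    case (2 v)
    have "min_steps_by_trace tau B tr v \<le> ?m - 1"
      using Least_le[of "reaches_by_trace tau B tr v", OF 2(2)] by (simp add: min_steps_by_trace_def)
    with \<open>0 < ?m\<close> have "min_steps_by_trace tau B tr v < ?m" by linarith
    with 2(1,2) show thesis by (rule that(2))
  next
    case (3 v c tr' k')
    then show thesis by (rule that(3))
  qed
qed

fun norm_target :: "'s + ('s \<times> 'a \<times> 's) \<Rightarrow> 's" where
  "norm_target (Inl s) = s"
| "norm_target (Inr (t, a, s)) = s"

definition trace_bsim_rel :: "'a \<Rightarrow> ('s, 'a) automaton \<Rightarrow> ('t, 'a) automaton \<Rightarrow> ('s \<times> 't) set" where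
  "trace_bsim_rel tau A B =
     {(s, u). s \<in> states A \<and> (\<exists>k. reaches_by_trace tau B (state_trace tau A s) u k)}"

definition trace_bsim_order ::
  "'a \<Rightarrow> ('s, 'a) automaton \<Rightarrow> ('t, 'a) automaton
     \<Rightarrow> ((('s + ('s \<times> 'a \<times> 's)) \<times> 't) \<times> (('s + ('s \<times> 'a \<times> 's)) \<times> 't)) set" where
  "trace_bsim_order tau A B =
     inv_image less_than (\<lambda>(x, u). min_steps_by_trace tau B (state_trace tau A (norm_target x)) u)"

lemma trace_bsim_rel_subset:
  assumes "is_automaton tau B"
  shows "trace_bsim_rel tau A B \<subseteq> states A \<times> states B"
  using reaches_by_trace_in_states[OF assms] by (auto simp: trace_bsim_rel_def)

lemma trace_bsim_rel_total:
  assumes "is_automaton tau A" and "is_forest A" and "fin_trace_incl tau A B"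
    and "s \<in> states A"
  shows "trace_bsim_rel tau A B `` {s} \<noteq> {}"
proof -
  have "state_trace tau A s \<in> fin_traces tau B"
    using state_trace_in_fin_traces[OF assms(1,2,4)] assms(3) by (auto simp: fin_trace_incl_def)
  then obtain u0 ys where "fin_exec B u0 ys" and "fin_trace tau ys = state_trace tau A s"
    by (auto simp: mem_fin_traces_iff)
  then have "reaches_by_trace tau B (state_trace tau A s) (last_state u0 ys) (length ys)"
    by (auto simp: reaches_by_trace_def)
  with assms(4) show ?thesis
    by (auto simp: trace_bsim_rel_def)
qed

lemma trace_bsim_rel_start:
  assumes "is_automaton tau A" and "is_forest A"
    and "s \<in> start A" and "u \<in> trace_bsim_rel tau A B `` {s}"
  shows "u \<in> start B \<or>
    (\<exists>v \<in> trace_bsim_rel tau A B `` {s}. (v, tau, u) \<in> steps B \<and>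
       ((Inl s, v), (Inl s, u)) \<in> trace_bsim_order tau A B)"
proof -
  have s: "s \<in> states A"
    using assms(1,3) by (auto simp: is_automaton_def)
  have trace: "state_trace tau A s = []"
    using state_trace_start[OF assms(1-3)] .
  from assms(4) obtain k where "reaches_by_trace tau B (state_trace tau A s) u k"
    by (auto simp: trace_bsim_rel_def)
  then show ?thesis
  proof (cases rule: reaches_by_trace_min_cases)
    case (2 v k')
    then show ?thesis
      using s by (auto simp: trace_bsim_rel_def trace_bsim_order_def)
  next
    case (3 v c tr' k')
    then show ?thesis
      using trace by simp
  qed simp
qed

lemma trace_bsim_rel_step:
  assumes "is_automaton tau A" and "is_forest A"
    and "(t, a, s) \<in> steps A" and "u \<in> trace_bsim_rel tau A B `` {s}"
  shows "(u \<in> trace_bsim_rel tau A B `` {t} \<and> a = tau) \<or>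
    (\<exists>v \<in> trace_bsim_rel tau A B `` {t}. (v, a, u) \<in> steps B) \<or>
    (\<exists>v \<in> trace_bsim_rel tau A B `` {s}. (v, tau, u) \<in> steps B \<and>
       ((Inr (t, a, s), v), (Inr (t, a, s), u)) \<in> trace_bsim_order tau A B)"
proof -
  have t: "t \<in> states A" and s: "s \<in> states A"
    using assms(1,3) by (auto simp: is_automaton_def)
  have trace: "state_trace tau A s = state_trace tau A t @ (if a = tau then [] else [a])"
    using state_trace_step[OF assms(1-3)] .
  from assms(4) obtain k where reach: "reaches_by_trace tau B (state_trace tau A s) u k"
    by (auto simp: trace_bsim_rel_def)
  show ?thesis
  proof (cases "a = tau")
    case True
    then show ?thesis
      using reach trace t by (auto simp: trace_bsim_rel_def)
  next
    case False
    from reach show ?thesis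
    proof (cases rule: reaches_by_trace_min_cases)
      case 1
      then show ?thesis
        using trace False by simp
    next
      case (2 v k')
      then show ?thesis
        using s by (auto simp: trace_bsim_rel_def trace_bsim_order_def)
    next
      case (3 v c tr' k')
      then have "c = a" and "tr' = state_trace tau A t"
        using trace False by simp_all
      then show ?thesis
        using 3 t by (auto simp: trace_bsim_rel_def)
    qed
  qed
qed

theorem mainTheorem6:
  fixes tau :: 'a and A :: "('s, 'a) automaton" and B :: "('t, 'a) automaton"
  assumes "is_automaton tau A" and "is_automaton tau B"
    and "is_forest A"
    and "fin_trace_incl tau A B"
  shows "bsim_le tau A B"
proof -
  \<comment> \<open>\<open>bsim_le\<close> fixes the norm's codomain to its domain: take the identity as norm and
    let the order compare lengths of shortest witnesses.\<close>
  have "normed_bsim tau A B (trace_bsim_rel tau A B) id (trace_bsim_order tau A B)"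
    unfolding normed_bsim_def id_apply
  proof (intro conjI ballI allI impI)
    show "wf (trace_bsim_order tau A B)" and "trans (trace_bsim_order tau A B)"
      by (simp_all add: trace_bsim_order_def trans_inv_image)
  qed (use trace_bsim_rel_subset[OF assms(2)] trace_bsim_rel_total[OF assms(1,3,4)]
         trace_bsim_rel_start[OF assms(1,3)] trace_bsim_rel_step[OF assms(1,3)] in simp_all)
  then show ?thesis
    unfolding bsim_le_def by blast
qed

end
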